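(* Let $a\in\mathbb{Q}\setminus\{-1,0,1\}$ and let $z\in\mathbb{C}$ with $|z|\le1$. For any positive real numbers $\xi<x$, \begin{multline*} \sum_{\substack{p\le x \\ \nu_p(a)=0}} z^{\omega((p-1)/\mathrm{ord}_p(a))} = \sum_{\ell\mid Q_\xi} \mu^2(\ell) (z-1)^{\omega(\ell)} \#\{ p\le x : \nu_p(a)=0,\ \ell \mid (p-1)/\mathrm{ord}_p(a) \} \\ + O\biggl( \sum_{\xi<q\le x} \#\{ p\le x : \nu_p(a)=0,\ q \mid (p-1)/\mathrm{ord}_p(a) \} \biggr), \end{multline*} with an absolute implied constant.
   Context: $p,q$ denote primes. $\nu_p(a)$ is the $p$-adic valuation of $a$; $\mathrm{ord}_p(a)$ is the multiplicative order of $a$ mod $p$; $\omega(n)$ is the number of distinct prime factors; $\mu$ is the Möbius function. For $\xi>0$, $Q_\xi$ is the least common multiple of all positive integers $\le\xi$. The convention $0^0=1$ is used. *)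

theory Defs
  imports "HOL-Analysis.Analysis" "HOL-Number_Theory.Number_Theory" "HOL-Computational_Algebra.Squarefree"
begin

definition rat_val :: "nat \<Rightarrow> rat \<Rightarrow> int" where
  "rat_val p a = (case quotient_of a of (n, d) \<Rightarrow>
      int (multiplicity (int p) n) - int (multiplicity (int p) d))"

definition rat_residue :: "nat \<Rightarrow> rat \<Rightarrow> nat" where
  "rat_residue p a = (case quotient_of a of (n, d) \<Rightarrow>
      nat ((n * modular_inverse (int p) d) mod int p))"

definition rat_ord :: "nat \<Rightarrow> rat \<Rightarrow> nat" where
  "rat_ord p a = ord p (rat_residue p a)"

definition omega :: "nat \<Rightarrow> nat" where
  "omega n = card (prime_factors n)"

definition mu :: "nat \<Rightarrow> int" where
  "mu n = (if squarefree n then (-1) ^ card (prime_factors n) else 0)"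

definition Q_lcm :: "real \<Rightarrow> nat" where
  "Q_lcm \<xi> = Lcm {1..nat \<lfloor>\<xi>\<rfloor>}"

definition cnt :: "rat \<Rightarrow> real \<Rightarrow> nat \<Rightarrow> nat" where
  "cnt a x l = card {p::nat. prime p \<and> real p \<le> x \<and> rat_val p a = 0 \<and>
                              l dvd (p - 1) div rat_ord p a}"

end

theory Submission imports Defs begin

text \<open>
  Expanding over the prime factors of \<open>n\<close> gives
  \<open>z ^ \<omega>(n) = \<Sum>\<^bsub>l | n\<^esub> \<mu>(l)\<^sup>2 (z - 1) ^ \<omega>(l)\<close>. Truncating the divisor sum to
  \<open>l | Q\<^sub>\<xi>\<close> yields \<open>z ^ \<omega>(gcd n Q\<^sub>\<xi>)\<close>, which equals \<open>z ^ \<omega>(n)\<close> unless \<open>n\<close> has a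
  prime factor \<open>q > \<xi>\<close>, and in that case the two differ by at most \<open>2\<close>. Applying this
  to \<open>n = (p - 1) / ord\<^sub>p(a)\<close>, summing over \<open>p\<close> and interchanging the order of
  summation gives the claim with implied constant \<open>2\<close>.
\<close>

lemma sum_Pow_power_card:
  fixes w :: "'a::comm_semiring_1"
  assumes "finite A"
  shows "(\<Sum>T\<in>Pow A. w ^ card T) = (1 + w) ^ card A"
  using prod_add[OF assms, of "\<lambda>_. w" "\<lambda>_. 1"] by (simp add: add.commute)

lemma prime_factors_Prod_primes:
  assumes "finite T" and "\<And>p. p \<in> T \<Longrightarrow> prime (p::nat)"
  shows "prime_factors (\<Prod>T) = T"
proof -
  have "0 \<notin> id ` T" using assms(2) by force
  then have "prime_factors (\<Prod>T) = \<Union>((prime_factors \<circ> id) ` T)"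
    using prime_factors_prod[OF assms(1), of id] by simp
  also have "\<dots> = T" using assms(2) by (auto simp: prime_prime_factors)
  finally show ?thesis .
qed

lemma squarefree_Prod_primes:
  assumes "\<And>p. p \<in> T \<Longrightarrow> prime (p::nat)"
  shows "squarefree (\<Prod>T)"
proof -
  have "squarefree (prod id T)"
    by (rule squarefree_prod_coprime) (auto intro: primes_coprime squarefree_prime assms)
  then show ?thesis by simp
qed

lemma squarefree_eq_Prod_prime_factors:
  assumes "squarefree (n::nat)"
  shows "n = \<Prod>(prime_factors n)"
proof -
  have n0: "n \<noteq> 0" using assms by (cases "n = 0") auto
  have "n = (\<Prod>p\<in>prime_factors n. p ^ multiplicity p n)"
    using prod_prime_factors[OF n0] by simp
  also have "\<dots> = \<Prod>(prime_factors n)"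
    using assms squarefree_factorial_semiring'[OF n0] by (intro prod.cong) auto
  finally show ?thesis .
qed

lemma Prod_prime_factors_dvd: "\<Prod>(prime_factors n) dvd (n::nat)"
proof (cases "n = 0")
  case False
  have "\<Prod>(prime_factors n) dvd (\<Prod>p\<in>prime_factors n. p ^ multiplicity p n)"
    by (intro prod_dvd_prod) (auto simp: prime_factors_multiplicity intro: dvd_power)
  also have "\<dots> = n" using prod_prime_factors[OF False] by simp
  finally show ?thesis .
qed simp

lemma squarefree_divisors_eq_image_Prod:
  assumes "(m::nat) \<noteq> 0"
  shows "{l. l dvd m \<and> squarefree l} = Prod ` Pow (prime_factors m)"
proof (intro equalityI subsetI)
  fix l assume l: "l \<in> {l. l dvd m \<and> squarefree l}"
  then have "prime_factors l \<subseteq> prime_factors m" using assms by (intro dvd_prime_factors) auto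
  with l show "l \<in> Prod ` Pow (prime_factors m)"
    using squarefree_eq_Prod_prime_factors by blast
next
  fix l assume "l \<in> Prod ` Pow (prime_factors m)"
  then obtain T where T: "T \<subseteq> prime_factors m" "l = \<Prod>T" by auto
  have "\<Prod>T dvd \<Prod>(prime_factors m)" using T by (intro prod_dvd_prod_subset) auto
  also have "\<dots> dvd m" by (rule Prod_prime_factors_dvd)
  finally show "l \<in> {l. l dvd m \<and> squarefree l}"
    using T by (auto intro: squarefree_Prod_primes)
qed

lemma sum_divisors_mu_squared_power_omega:
  fixes w :: "'a::comm_ring_1"
  assumes "m \<noteq> 0"
  shows "(\<Sum>l | l dvd m. of_int ((mu l)\<^sup>2) * w ^ omega l) = (1 + w) ^ omega m"
proof -
  have factors: "prime_factors (\<Prod>T) = T" if "T \<in> Pow (prime_factors m)" for T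
    using that by (intro prime_factors_Prod_primes) (auto intro: finite_subset)
  then have inj: "inj_on Prod (Pow (prime_factors m))" by (metis inj_onI)
  have "(\<Sum>l | l dvd m. of_int ((mu l)\<^sup>2) * w ^ omega l)
      = (\<Sum>l | l dvd m \<and> squarefree l. w ^ omega l)"
    using assms by (intro sum.mono_neutral_cong_right) (auto simp: mu_def simp flip: power_mult)
  also have "\<dots> = (\<Sum>T\<in>Pow (prime_factors m). w ^ omega (\<Prod>T))"
    unfolding squarefree_divisors_eq_image_Prod[OF assms] using inj by (simp add: sum.reindex)
  also have "\<dots> = (\<Sum>T\<in>Pow (prime_factors m). w ^ card T)"
    unfolding omega_def by (intro sum.cong refl) (simp add: factors)
  also have "\<dots> = (1 + w) ^ omega m" by (simp add: sum_Pow_power_card omega_def)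
  finally show ?thesis .
qed

lemma norm_power_omega_minus_truncated_divisor_sum:
  fixes z :: complex
  assumes n: "n \<noteq> 0" and Q: "Q \<noteq> 0" and z: "cmod z \<le> 1"
  shows "cmod (z ^ omega n - (\<Sum>l | l dvd Q \<and> l dvd n. of_int ((mu l)\<^sup>2) * (z - 1) ^ omega l))
           \<le> 2 * real (card (prime_factors n - prime_factors Q))"
proof -
  have "{l. l dvd Q \<and> l dvd n} = {l. l dvd gcd Q n}" by auto
  then have truncated: "(\<Sum>l | l dvd Q \<and> l dvd n. of_int ((mu l)\<^sup>2) * (z - 1) ^ omega l)
      = z ^ omega (gcd Q n)"
    using sum_divisors_mu_squared_power_omega[of "gcd Q n" "z - 1"] Q by simp
  show ?thesis
  proof (cases "prime_factors n \<subseteq> prime_factors Q")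
    case True
    then have "prime_factors (gcd Q n) = prime_factors n" using n Q by auto
    then show ?thesis using truncated by (simp add: omega_def)
  next
    case False
    have "cmod (z ^ k) \<le> 1" for k using z by (simp add: norm_power power_le_one)
    then have "cmod (z ^ omega n - z ^ omega (gcd Q n)) \<le> 1 + 1"
      by (meson add_mono norm_triangle_ineq4 order_trans)
    moreover have "card (prime_factors n - prime_factors Q) \<ge> 1"
      using False by (simp add: Suc_le_eq card_gt_0_iff)
    ultimately show ?thesis using truncated by simp
  qed
qed

lemma sum_mult_card_filter_swap:
  fixes c :: "'b \<Rightarrow> 'c::comm_semiring_1"
  assumes "finite A" and "finite B"
  shows "(\<Sum>b\<in>B. c b * of_nat (card {a\<in>A. R b a})) = (\<Sum>a\<in>A. \<Sum>b | b \<in> B \<and> R b a. c b)"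
  using sum.swap_restrict[OF assms(2,1), of "\<lambda>b a. c b" R] by (simp add: mult.commute)

lemma norm_sum_power_omega_minus_truncated_sieve:
  fixes z :: complex and N :: "'p \<Rightarrow> nat"
  assumes fin: "finite S" "finite P" and Q: "Q \<noteq> 0" and z: "cmod z \<le> 1"
    and N: "\<And>p. p \<in> S \<Longrightarrow> N p \<noteq> 0"
    and large: "\<And>p. p \<in> S \<Longrightarrow> prime_factors (N p) - prime_factors Q = {q\<in>P. q dvd N p}"
  shows "cmod ((\<Sum>p\<in>S. z ^ omega (N p))
            - (\<Sum>l | l dvd Q. of_int ((mu l)\<^sup>2) * (z - 1) ^ omega l * of_nat (card {p\<in>S. l dvd N p})))
         \<le> 2 * (\<Sum>q\<in>P. real (card {p\<in>S. q dvd N p}))"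
proof -
  define c where "c l = of_int ((mu l)\<^sup>2) * (z - 1) ^ omega l" for l
  have divisors: "finite {l. l dvd Q}" using Q by simp
  have "cmod ((\<Sum>p\<in>S. z ^ omega (N p)) - (\<Sum>l | l dvd Q. c l * of_nat (card {p\<in>S. l dvd N p})))
      \<le> (\<Sum>p\<in>S. cmod (z ^ omega (N p) - (\<Sum>l | l dvd Q \<and> l dvd N p. c l)))"
    unfolding sum_mult_card_filter_swap[OF fin(1) divisors, of c "\<lambda>l p. l dvd N p"]
    by (simp add: sum_subtractf[symmetric] norm_sum)
  also have "\<dots> \<le> (\<Sum>p\<in>S. 2 * real (card {q\<in>P. q dvd N p}))"
    using norm_power_omega_minus_truncated_divisor_sum[OF N Q z]
    by (intro sum_mono) (simp add: large c_def)
  also have "\<dots> = 2 * (\<Sum>q\<in>P. real (card {p\<in>S. q dvd N p}))"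
    using sum_mult_card_filter_swap[OF fin, of "\<lambda>_. 1::real" "\<lambda>q p. q dvd N p"]
    by (simp add: sum_distrib_left)
  finally show ?thesis by (simp add: c_def)
qed

lemma not_dvd_quotient_of_rat_val_zero:
  assumes "quotient_of a = (n, d)" and "a \<noteq> 0" and "prime p" and "rat_val p a = 0"
  shows "\<not> int p dvd n" and "\<not> int p dvd d"
proof -
  have d: "d \<noteq> 0" using assms(1) quotient_of_denom_pos by fastforce
  have n: "n \<noteq> 0" using assms(1,2) quotient_of_div by fastforce
  have p: "prime (int p)" using assms(3) by simp
  have mult_eq: "multiplicity (int p) n = multiplicity (int p) d"
    using assms(1,4) by (simp add: rat_val_def)
  have "int p dvd n \<longleftrightarrow> int p dvd d"
    using mult_eq prime_multiplicity_gt_zero_iff[OF prime_imp_prime_elem[OF p]] n d by metis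
  moreover have "\<not> (int p dvd n \<and> int p dvd d)"
    using quotient_of_coprime[OF assms(1)] p by (meson coprime_common_divisor not_prime_unit)
  ultimately show "\<not> int p dvd n" and "\<not> int p dvd d" by blast+
qed

lemma coprime_rat_residue:
  assumes "a \<noteq> 0" and p: "prime p" and "rat_val p a = 0"
  shows "coprime p (rat_residue p a)"
proof -
  obtain n d where nd: "quotient_of a = (n, d)" by (cases "quotient_of a") auto
  note not_dvd = not_dvd_quotient_of_rat_val_zero[OF nd assms]
  define d' where "d' = modular_inverse (int p) d"
  have "coprime d (int p)"
    using not_dvd(2) p by (meson coprime_commute prime_imp_coprime prime_nat_int_transfer)
  then have "[d * d' = 1] (mod int p)" unfolding d'_def by (rule cong_modular_inverse1)
  then have cong: "[n * d' * d = n] (mod int p)"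
    by (metis cong_scalar_left mult.assoc mult.commute mult.right_neutral)
  have residue: "int (rat_residue p a) = n * d' mod int p"
    using nd p by (simp add: rat_residue_def d'_def prime_gt_0_nat)
  have "int p dvd n" if "p dvd rat_residue p a"
  proof -
    have "int p dvd n * d' mod int p" using that residue by (metis int_dvd_int_iff)
    then have "int p dvd n * d' * d" by (simp add: dvd_mod_iff)
    then show ?thesis using cong cong_dvd_iff by blast
  qed
  then show ?thesis using not_dvd(1) p by (auto intro: prime_imp_coprime)
qed

lemma index_rat_ord_pos:
  assumes "a \<noteq> 0" and p: "prime p" and "rat_val p a = 0"
  shows "0 < (p - 1) div rat_ord p a"
proof -
  have cop: "coprime p (rat_residue p a)" using coprime_rat_residue[OF assms] .
  then have "0 < rat_ord p a" by (simp add: rat_ord_def)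
  moreover have "rat_ord p a dvd p - 1"
    using order_divides_totient[OF cop] p by (simp add: rat_ord_def totient_prime)
  moreover have "0 < p - 1" using p prime_gt_1_nat by simp
  ultimately show ?thesis by (simp add: div_greater_zero_iff dvd_imp_le)
qed

lemma Q_lcm_nonzero: "Q_lcm \<xi> \<noteq> 0"
  by (simp add: Q_lcm_def Lcm_0_iff)

lemma prime_dvd_Q_lcm_iff:
  assumes q: "prime q"
  shows "q dvd Q_lcm \<xi> \<longleftrightarrow> real q \<le> \<xi>"
proof
  assume "q dvd Q_lcm \<xi>"
  moreover have "Q_lcm \<xi> dvd fact (nat \<lfloor>\<xi>\<rfloor>)"
    unfolding Q_lcm_def by (intro Lcm_least) (auto intro: dvd_fact)
  ultimately have "q \<le> nat \<lfloor>\<xi>\<rfloor>" using q prime_dvd_fact_iff dvd_trans by blast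
  then have "int q \<le> \<lfloor>\<xi>\<rfloor>" using q prime_gt_0_nat[of q] by linarith
  then show "real q \<le> \<xi>" by (simp add: le_floor_iff)
next
  assume "real q \<le> \<xi>"
  then have "q \<in> {1..nat \<lfloor>\<xi>\<rfloor>}" using q prime_gt_0_nat by (simp add: le_nat_floor Suc_le_eq)
  then show "q dvd Q_lcm \<xi>" unfolding Q_lcm_def by (rule dvd_Lcm)
qed

lemma prime_factors_diff_Q_lcm:
  assumes "n \<noteq> 0" and "real n \<le> x"
  shows "prime_factors n - prime_factors (Q_lcm \<xi>) = {q\<in>{q. prime q \<and> \<xi> < real q \<and> real q \<le> x}. q dvd n}"
proof -
  have "real q \<le> x" if "q dvd n" for q
    using dvd_imp_le[OF that] assms by (simp add: order_trans)
  then show ?thesis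
    using assms(1) Q_lcm_nonzero prime_dvd_Q_lcm_iff by (auto simp: in_prime_factors_iff not_le)
qed

theorem proposition2p3:
  "\<exists>C::real. \<forall>(a::rat) (z::complex) (\<xi>::real) (x::real).
     a \<notin> {-1, 0, 1} \<and> cmod z \<le> 1 \<and> 0 < \<xi> \<and> \<xi> < x \<longrightarrow>
     cmod ((\<Sum>p\<in>{p::nat. prime p \<and> real p \<le> x \<and> rat_val p a = 0}.
               z ^ omega ((p - 1) div rat_ord p a))
         - (\<Sum>l\<in>{l::nat. l dvd Q_lcm \<xi>}.
               of_int ((mu l)^2) * (z - 1) ^ omega l * of_nat (cnt a x l)))
     \<le> C * (\<Sum>q\<in>{q::nat. prime q \<and> \<xi> < real q \<and> real q \<le> x}. real (cnt a x q))"
proof (intro exI[of _ 2] allI impI)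
  fix a :: rat and z :: complex and \<xi> x :: real
  assume "a \<notin> {-1, 0, 1} \<and> cmod z \<le> 1 \<and> 0 < \<xi> \<and> \<xi> < x"
  then have a: "a \<noteq> 0" and z: "cmod z \<le> 1" by auto
  define S where "S = {p::nat. prime p \<and> real p \<le> x \<and> rat_val p a = 0}"
  define P where "P = {q::nat. prime q \<and> \<xi> < real q \<and> real q \<le> x}"
  define N where "N p = (p - 1) div rat_ord p a" for p
  have "S \<subseteq> {..nat \<lfloor>x\<rfloor>}" "P \<subseteq> {..nat \<lfloor>x\<rfloor>}"
    by (auto simp: S_def P_def le_nat_floor)
  then have fin: "finite S" "finite P" by (auto intro: finite_subset)
  have N: "N p \<noteq> 0" "real (N p) \<le> x" if p: "p \<in> S" for p
  proof -
    show "N p \<noteq> 0" using p index_rat_ord_pos[OF a] by (simp add: S_def N_def)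
    have "N p \<le> p" unfolding N_def using div_le_dividend diff_le_self le_trans by blast
    then show "real (N p) \<le> x" using p by (simp add: S_def)
  qed
  have cnt: "cnt a x l = card {p\<in>S. l dvd N p}" for l
    unfolding cnt_def S_def N_def by (rule arg_cong[of _ _ card]) auto
  from norm_sum_power_omega_minus_truncated_sieve[OF fin Q_lcm_nonzero z N(1)]
  show "cmod ((\<Sum>p\<in>{p::nat. prime p \<and> real p \<le> x \<and> rat_val p a = 0}.
               z ^ omega ((p - 1) div rat_ord p a))
         - (\<Sum>l\<in>{l::nat. l dvd Q_lcm \<xi>}.
               of_int ((mu l)^2) * (z - 1) ^ omega l * of_nat (cnt a x l)))
     \<le> 2 * (\<Sum>q\<in>{q::nat. prime q \<and> \<xi> < real q \<and> real q \<le> x}. real (cnt a x q))"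
    unfolding cnt S_def[symmetric] P_def[symmetric] N_def[symmetric]
    using prime_factors_diff_Q_lcm[OF N] P_def by simp
qed

end
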